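(* The ODMTS design found by Algorithm arc-S1 with expansion rule (d) satisfies the correct adoption property: writing the design as $\mathbf{z} = \mbox{ODMTS-DFD}(\hat{T})$ for the trip set $\hat{T}$ used to obtain it, every rider $r \in \hat{T}$ adopts the ODMTS option in $\mathbf{z}$.
   Context: Setting (On-Demand Multimodal Transit System design with adoption awareness). There is a set $T$ of trips (riders) and a set $H$ of hubs; a network design is a vector $\mathbf{z} \in \{0,1\}^{|H|\times|H|}$ of opened bus arcs $z_{hl}$ satisfying flow balance $\sum_{l} z_{hl} = \sum_l z_{lh}$ for all $h \in H$. The trips split into core trips $T \setminus T'$ (existing riders, always served, always in the considered trip set) and latent trips $T'$; a latent trip $r$ adopts the ODMTS under a design iff its ODMTS travel time is at most $\alpha^r t^r_{cur}$ (its current travel time scaled by $\alpha^r$). ODMTS-DFD$(\hat{T})$ denotes the bilevel design problem with fixed demand $\hat{T} \subseteq T$: minimize $\sum_{h,l} \beta_{hl} z_{hl} + \sum_{r \in \hat{T}} p^r g^r$, where each rider $r \in \hat{T}$ takes a cost-and-convenience-optimal route using opened bus arcs and on-demand shuttle legs; ODMTS-DFD$(\hat{T}, A)$ additionally forces all arcs in $A$ to be opened. The function $eval(\mathbf{z})$ evaluates a design on the full trip set $T$. Algorithm arc-S1 (parametrized by a function Expand): start with $k=0$, $\mathbf{z}_{fixed} = \vec{0}$, $\overline{T}^0 = T \setminus T'$, $B^0 = \infty$. Repeat: solve $\mathbf{z}^k_{temp} = $ ODMTS-DFD$(\overline{T}^k, \{(h,l) : (z_{fixed})_{hl}=1\})$;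 let $Y^k$ be the set of directed cycles in $\mathbf{z}^k_{temp} - \mathbf{z}_{fixed}$; if $Y^k = \emptyset$ stop; otherwise choose $\mathbf{y}^k \in Y^k$ minimizing $eval(\mathbf{z}_{fixed} + \mathbf{y})$ with value $obj^k$; if $obj^k < B^k$ set $B^{k+1} = obj^k$, else stop; set $\mathbf{z}_{fixed} = \mathbf{z}_{fixed} + \mathbf{y}^k$, $\mathbf{z}^k = \mathbf{z}_{fixed}$, $T'^k_{next} = $ Expand$(T', \mathbf{z}^k)$, $\overline{T}^{k+1} = \overline{T}^k \cup T'^k_{next}$, $k=k+1$. Return $\mathbf{z}^k$. The designs $\mathbf{z}^0 \le \mathbf{z}^1 \le \dots$ increase componentwise. Expansion rule (d): Expand$(T', \mathbf{z}^k)$ returns every latent trip $r$ that adopts $\mathbf{z}^k$ and satisfies $UB^r \le \alpha^r t^r_{cur}$, where $UB^r$ is an upper bound (from a result of Basciftci et al. 2021) on the ODMTS travel time of trip $r$ under any design $\mathbf{z}' \ge \mathbf{z}^k$: with $t^1$ the travel time of $r$ under $\mathbf{z}^k$, $d$ distances, $g$ a shuttle time-per-distance factor and $\theta$ the cost/convenience weight, $UB^r = t^1 + \frac{1-\theta}{\theta} g \big(d_{or^r m} + d_{n de^r} - \min_{h,l \in H}\{d_{or^r h} + d_{l de^r}\}\big)$ if $r$ uses a multimodal route with first hub $m$ and last hub $n$, and $UB^r = \max\{t^1, t^1 + \frac{1-\theta}{\theta} g (d_{or^r de^r} - \min_{h,l\in H}\{d_{or^r h} + d_{l de^r}\})\}$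 if $r$ uses a direct shuttle. Consequently, a trip satisfying this condition adopts every design $\mathbf{z}' \ge \mathbf{z}^k$. *)

theory Defs
  imports Complex_Main
begin

text \<open>Hubs and trip endpoints are locations of type 'v; a network design is the set
  of opened bus arcs (the 0/1 vector z), a subset of H x H.\<close>

type_synonym 'v design = "('v \<times> 'v) set"

definition feasible_design :: "'v set \<Rightarrow> 'v design \<Rightarrow> bool" where
  "feasible_design H z \<longleftrightarrow> z \<subseteq> H \<times> H \<and>
     (\<forall>h\<in>H. card {l. (h, l) \<in> z} = card {l. (l, h) \<in> z})"

text \<open>Objective of ODMTS-DFD(That): bus-arc costs plus weighted rider costs g^r,
  where gc z r is the cost/convenience of the optimal route of rider r under z.\<close>

definition dfd_obj ::
  "('v \<times> 'v \<Rightarrow> real) \<Rightarrow> ('t \<Rightarrow> real) \<Rightarrow> ('v design \<Rightarrow> 't \<Rightarrow> real) \<Rightarrow> 't set \<Rightarrow> 'v design \<Rightarrow> real" where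
  "dfd_obj \<beta> p gc That z = (\<Sum>a\<in>z. \<beta> a) + (\<Sum>r\<in>That. p r * gc z r)"

definition is_dfd_solution ::
  "'v set \<Rightarrow> ('v \<times> 'v \<Rightarrow> real) \<Rightarrow> ('t \<Rightarrow> real) \<Rightarrow> ('v design \<Rightarrow> 't \<Rightarrow> real)
     \<Rightarrow> 't set \<Rightarrow> 'v design \<Rightarrow> 'v design \<Rightarrow> bool" where
  "is_dfd_solution H \<beta> p gc That A z \<longleftrightarrow>
     feasible_design H z \<and> A \<subseteq> z \<and>
     (\<forall>z'. feasible_design H z' \<and> A \<subseteq> z' \<longrightarrow> dfd_obj \<beta> p gc That z \<le> dfd_obj \<beta> p gc That z')"

definition directed_cycle :: "'v design \<Rightarrow> 'v design \<Rightarrow> bool" where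
  "directed_cycle C y \<longleftrightarrow>
     (\<exists>vs. length vs \<ge> 2 \<and> distinct vs \<and>
        y = {(vs ! i, vs ! (Suc i mod length vs)) | i. i < length vs}) \<and> y \<subseteq> C"

text \<open>Route type used by a rider: direct shuttle, or multimodal with first hub m, last hub n.\<close>

datatype 'v route = Direct | Multi 'v 'v

definition odmts_UB ::
  "'v set \<Rightarrow> ('v \<Rightarrow> 'v \<Rightarrow> real) \<Rightarrow> real \<Rightarrow> real \<Rightarrow> 'v \<Rightarrow> 'v \<Rightarrow> 'v route \<Rightarrow> real \<Rightarrow> real" where
  "odmts_UB H d g \<theta> src dst rt t1 =
     (let mn = Min {d src h + d l dst | h l. h \<in> H \<and> l \<in> H} in
      case rt of
        Multi m n \<Rightarrow> t1 + (1 - \<theta>) / \<theta> * g * (d src m + d n dst - mn)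
      | Direct \<Rightarrow> max t1 (t1 + (1 - \<theta>) / \<theta> * g * (d src dst - mn)))"

text \<open>Adoption: core trips (not latent) are always served; a latent trip adopts z iff
  its ODMTS travel time under z is at most alpha^r times its current travel time.\<close>

definition adopts ::
  "'t set \<Rightarrow> ('t \<Rightarrow> real) \<Rightarrow> ('t \<Rightarrow> real) \<Rightarrow> ('v design \<Rightarrow> 't \<Rightarrow> real) \<Rightarrow> 'v design \<Rightarrow> 't \<Rightarrow> bool" where
  "adopts T' \<alpha> tcur ttime z r \<longleftrightarrow> r \<notin> T' \<or> ttime z r \<le> \<alpha> r * tcur r"

definition expand_d ::
  "'v set \<Rightarrow> ('v \<Rightarrow> 'v \<Rightarrow> real) \<Rightarrow> real \<Rightarrow> real \<Rightarrow> ('t \<Rightarrow> 'v) \<Rightarrow> ('t \<Rightarrow> 'v)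
    \<Rightarrow> 't set \<Rightarrow> ('t \<Rightarrow> real) \<Rightarrow> ('t \<Rightarrow> real)
    \<Rightarrow> ('v design \<Rightarrow> 't \<Rightarrow> real) \<Rightarrow> ('v design \<Rightarrow> 't \<Rightarrow> 'v route) \<Rightarrow> 'v design \<Rightarrow> 't set" where
  "expand_d H d g \<theta> orig dest T' \<alpha> tcur ttime route z =
     {r \<in> T'. adopts T' \<alpha> tcur ttime z r \<and>
        odmts_UB H d g \<theta> (orig r) (dest r) (route z r) (ttime z r) \<le> \<alpha> r * tcur r}"

end

theory Submission
  imports Defs
begin

text \<open>Rule (d) only admits a latent trip r into the demand when the upper bound of
  Basciftci et al. certifies that r adopts every feasible design containing the
  current one. The designs produced by arc-S1 only grow, and each of them is
  feasible because it arises from a feasible design by adding an arc-disjoint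
  directed cycle, which keeps in- and out-degrees balanced. Hence every latent
  trip in the final demand adopts the final design, and core trips adopt by
  definition.\<close>

lemma card_successors_eq_card_predecessors:
  assumes inj: "inj_on f I" and \<sigma>: "bij_betw \<sigma> I I"
  defines "E \<equiv> (\<lambda>i. (f i, f (\<sigma> i))) ` I"
  shows "card {l. (h, l) \<in> E} = card {l. (l, h) \<in> E}"
proof -
  have \<sigma>_into: "\<sigma> i \<in> I" if "i \<in> I" for i
    using \<sigma> that by (auto simp: bij_betw_def)
  have "{l. (h, l) \<in> E} = (f \<circ> \<sigma>) ` {i \<in> I. f i = h}"
    by (auto simp: E_def)
  moreover have "inj_on (f \<circ> \<sigma>) {i \<in> I. f i = h}"
    using inj \<sigma> \<sigma>_into by (auto simp: bij_betw_def inj_on_def)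
  ultimately have out: "card {l. (h, l) \<in> E} = card {i \<in> I. f i = h}"
    by (metis card_image)
  have "{l. (l, h) \<in> E} = f ` {i \<in> I. f (\<sigma> i) = h}"
    by (auto simp: E_def)
  then have "card {l. (l, h) \<in> E} = card {i \<in> I. f (\<sigma> i) = h}"
    using inj by (simp add: card_image inj_on_subset)
  also have "\<dots> = card (\<sigma> ` {i \<in> I. f (\<sigma> i) = h})"
    by (rule card_image[symmetric], rule inj_on_subset[OF bij_betw_imp_inj_on[OF \<sigma>]]) auto
  also have "\<sigma> ` {i \<in> I. f (\<sigma> i) = h} = {i \<in> I. f i = h}"
    using bij_betw_imp_surj_on[OF \<sigma>] by force
  finally show ?thesis
    using out by simp
qed

lemma bij_betw_Suc_mod: "bij_betw (\<lambda>i. Suc i mod L) {..<L} {..<L}"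
proof (cases "L = 0")
  case False
  have "inj_on (\<lambda>i. Suc i mod L) {..<L}"
    by (auto simp: inj_on_def mod_if split: if_splits)
  moreover have "(\<lambda>i. Suc i mod L) ` {..<L} \<subseteq> {..<L}"
    using False by auto
  ultimately show ?thesis
    by (simp add: bij_betw_def endo_inj_surj)
qed simp

lemma directed_cycle_balanced:
  assumes "directed_cycle C y"
  shows "card {l. (h, l) \<in> y} = card {l. (l, h) \<in> y}"
proof -
  obtain vs where "distinct vs"
    and y: "y = (\<lambda>i. (vs ! i, vs ! (Suc i mod length vs))) ` {..<length vs}"
    using assms unfolding directed_cycle_def by blast
  then have "inj_on ((!) vs) {..<length vs}"
    by (simp add: inj_on_nth)
  then show ?thesis
    unfolding y by (rule card_successors_eq_card_predecessors[OF _ bij_betw_Suc_mod])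
qed

lemma feasible_design_Un_disjoint:
  assumes "finite H" "feasible_design H A" "feasible_design H B" "A \<inter> B = {}"
  shows "feasible_design H (A \<union> B)"
  unfolding feasible_design_def
proof (intro conjI ballI)
  show "A \<union> B \<subseteq> H \<times> H"
    using assms(2,3) by (simp add: feasible_design_def)
  fix h assume "h \<in> H"
  have fin: "finite {l. (h, l) \<in> X}" "finite {l. (l, h) \<in> X}" if "X \<subseteq> H \<times> H" for X
    using that \<open>finite H\<close> by (auto intro: finite_subset)
  have AB: "A \<subseteq> H \<times> H" "B \<subseteq> H \<times> H"
    "card {l. (h, l) \<in> A} = card {l. (l, h) \<in> A}"
    "card {l. (h, l) \<in> B} = card {l. (l, h) \<in> B}"
    using assms(2,3) \<open>h \<in> H\<close> by (auto simp: feasible_design_def)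
  have "{l. (h, l) \<in> A \<union> B} = {l. (h, l) \<in> A} \<union> {l. (h, l) \<in> B}"
    "{l. (l, h) \<in> A \<union> B} = {l. (l, h) \<in> A} \<union> {l. (l, h) \<in> B}"
    by auto
  moreover have
    "card ({l. (h, l) \<in> A} \<union> {l. (h, l) \<in> B}) = card {l. (h, l) \<in> A} + card {l. (h, l) \<in> B}"
    "card ({l. (l, h) \<in> A} \<union> {l. (l, h) \<in> B}) = card {l. (l, h) \<in> A} + card {l. (l, h) \<in> B}"
    using AB(1,2) assms(4) by (auto intro!: card_Un_disjoint fin)
  ultimately show "card {l. (h, l) \<in> A \<union> B} = card {l. (l, h) \<in> A \<union> B}"
    using AB(3,4) by simp
qed

lemma feasible_design_Un_cycle:
  assumes "finite H" "feasible_design H A" "feasible_design H z"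
    and cycle: "directed_cycle (z - A) y"
  shows "feasible_design H (A \<union> y)"
proof (rule feasible_design_Un_disjoint)
  have "y \<subseteq> z - A"
    using cycle by (simp add: directed_cycle_def)
  then show "feasible_design H y" "A \<inter> y = {}"
    using \<open>feasible_design H z\<close> directed_cycle_balanced[OF cycle]
    by (auto simp: feasible_design_def)
qed (use assms in auto)

lemma expand_d_adopts_superdesigns:
  assumes basciftci: "\<And>z z' r. feasible_design H z \<Longrightarrow> feasible_design H z' \<Longrightarrow> z \<subseteq> z' \<Longrightarrow>
         r \<in> T' \<Longrightarrow> ttime z' r \<le> odmts_UB H d g \<theta> (orig r) (dest r) (route z r) (ttime z r)"
    and "r \<in> expand_d H d g \<theta> orig dest T' \<alpha> tcur ttime route z"
    and "feasible_design H z" "feasible_design H z'" "z \<subseteq> z'"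
  shows "adopts T' \<alpha> tcur ttime z' r"
proof -
  have "r \<in> T'" and "odmts_UB H d g \<theta> (orig r) (dest r) (route z r) (ttime z r) \<le> \<alpha> r * tcur r"
    using assms(2) by (auto simp: expand_d_def)
  then have "ttime z' r \<le> \<alpha> r * tcur r"
    using basciftci[OF assms(3-5)] by (meson order_trans)
  then show ?thesis
    by (simp add: adopts_def)
qed

lemma chain_subset:
  assumes "\<And>k. k < n \<Longrightarrow> A k \<subseteq> A (Suc k)" "k \<le> m" "m \<le> n"
  shows "A k \<subseteq> A m"
  using assms(2,3)
proof (induction m rule: dec_induct)
  case (step m)
  then show ?case
    using assms(1)[of m] by simp
qed simp

lemma mem_Un_chain_imp_added:
  assumes "A 0 \<inter> S = {}" "\<And>k. k < n \<Longrightarrow> A (Suc k) = A k \<union> E k"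
    and "r \<in> A m" "r \<in> S" "m \<le> n"
  shows "\<exists>k<m. r \<in> E k"
  using assms(3,5)
proof (induction m)
  case 0
  then show ?case
    using assms(1,4) by auto
next
  case (Suc m)
  then show ?case
    using assms(2)[of m] less_Suc_eq by auto
qed

theorem mainTheorem7:
  fixes H :: "'v set" and T T' :: "'t set"
    and \<beta> :: "'v \<times> 'v \<Rightarrow> real" and p :: "'t \<Rightarrow> real"
    and gc :: "'v design \<Rightarrow> 't \<Rightarrow> real"
    and ttime :: "'v design \<Rightarrow> 't \<Rightarrow> real"
    and route :: "'v design \<Rightarrow> 't \<Rightarrow> 'v route"
    and eval :: "'v design \<Rightarrow> real"
    and d :: "'v \<Rightarrow> 'v \<Rightarrow> real" and g \<theta> :: real
    and orig dest :: "'t \<Rightarrow> 'v"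
    and \<alpha> tcur :: "'t \<Rightarrow> real"
    and n :: nat
    and ztemp zfix y :: "nat \<Rightarrow> 'v design"
    and Tbar :: "nat \<Rightarrow> 't set"
  assumes finH: "finite H" and neH: "H \<noteq> {}"
    and finT: "finite T" and latent: "T' \<subseteq> T"
    and theta: "0 < \<theta>" "\<theta> < 1"
    and basciftci: "\<And>z z' r. feasible_design H z \<Longrightarrow> feasible_design H z' \<Longrightarrow> z \<subseteq> z' \<Longrightarrow>
         r \<in> T' \<Longrightarrow> ttime z' r \<le> odmts_UB H d g \<theta> (orig r) (dest r) (route z r) (ttime z r)"
    and zfix0: "zfix 0 = {}"
    and Tbar0: "Tbar 0 = T - T'"
    and iter: "\<And>k. k < n \<Longrightarrow>
         is_dfd_solution H \<beta> p gc (Tbar k) (zfix k) (ztemp k) \<and>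
         directed_cycle (ztemp k - zfix k) (y k) \<and>
         (\<forall>y'. directed_cycle (ztemp k - zfix k) y' \<longrightarrow> eval (zfix k \<union> y k) \<le> eval (zfix k \<union> y')) \<and>
         (k = 0 \<or> eval (zfix k \<union> y k) < eval (zfix (k - 1) \<union> y (k - 1))) \<and>
         zfix (Suc k) = zfix k \<union> y k \<and>
         Tbar (Suc k) = Tbar k \<union> expand_d H d g \<theta> orig dest T' \<alpha> tcur ttime route (zfix (Suc k))"
    and stop: "is_dfd_solution H \<beta> p gc (Tbar n) (zfix n) (ztemp n) \<and>
         ((\<forall>y'. \<not> directed_cycle (ztemp n - zfix n) y') \<or>
          (\<exists>y'. directed_cycle (ztemp n - zfix n) y' \<and>
             (\<forall>y''. directed_cycle (ztemp n - zfix n) y'' \<longrightarrow> eval (zfix n \<union> y') \<le> eval (zfix n \<union> y'')) \<and>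
             0 < n \<and> eval (zfix (n - 1) \<union> y (n - 1)) \<le> eval (zfix n \<union> y')))"
  shows "\<forall>r\<in>Tbar n. adopts T' \<alpha> tcur ttime (zfix n) r"
proof
  have feasible: "feasible_design H (zfix k)" if "k \<le> n" for k
    using that
  proof (induction k)
    case (Suc k)
    then have "feasible_design H (zfix k)" "is_dfd_solution H \<beta> p gc (Tbar k) (zfix k) (ztemp k)"
      "directed_cycle (ztemp k - zfix k) (y k)" "zfix (Suc k) = zfix k \<union> y k"
      using iter[of k] by auto
    then show ?case
      using feasible_design_Un_cycle[OF finH] by (auto simp: is_dfd_solution_def)
  qed (simp add: zfix0 feasible_design_def)
  fix r assume r: "r \<in> Tbar n"
  show "adopts T' \<alpha> tcur ttime (zfix n) r"
  proof (cases "r \<in> T'")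
    case True
    have "\<exists>k<n. r \<in> expand_d H d g \<theta> orig dest T' \<alpha> tcur ttime route (zfix (Suc k))"
    proof (rule mem_Un_chain_imp_added[where A = Tbar and S = T'])
      show "Tbar (Suc k) = Tbar k \<union> expand_d H d g \<theta> orig dest T' \<alpha> tcur ttime route (zfix (Suc k))"
        if "k < n" for k
        using iter[OF that] by blast
    qed (use Tbar0 r True in auto)
    then obtain k where "k < n"
      and "r \<in> expand_d H d g \<theta> orig dest T' \<alpha> tcur ttime route (zfix (Suc k))"
      by blast
    moreover have "zfix (Suc k) \<subseteq> zfix n"
      using \<open>k < n\<close> chain_subset[of n zfix "Suc k" n] iter by auto
    ultimately show ?thesis
      using expand_d_adopts_superdesigns[where ttime = ttime and route = route, OF basciftci] feasible
      by simp
  qed (simp add: adopts_def)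
qed

end
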